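(* For every integer $n\ge1$, $\operatorname{num}_{\mathcal O}(n,-1)=o(n!)$, where $o(M)$ denotes the largest odd divisor of a positive integer $M$.
   Context: An odd partition of $n$ is a partition of $n$ (finite nonincreasing sequence of positive integers summing to $n$) all of whose parts are odd; $\mathcal O(n)$ is the set of odd partitions of $n$, and $m_\lambda(i)$ the number of parts of $\lambda$ equal to $i$. For $\lambda\in\mathcal O(n)$ let $h_{\mathcal O,\lambda}(x)=\prod_{i\ge1,\ i\text{ odd}}(1+x^i)^{\lfloor n/i\rfloor-m_\lambda(i)}$. Let $G_{\mathcal O}(n,x)=\gcd\{h_{\mathcal O,\lambda}(x):\lambda\in\mathcal O(n)\}$ in $\mathbb{Z}[x]$ (normalized with positive leading coefficient), and $\operatorname{num}_{\mathcal O}(n,x)=\frac{1}{G_{\mathcal O}(n,x)}\sum_{\lambda\in\mathcal O(n)}h_{\mathcal O,\lambda}(x)\in\mathbb{Z}[x]$. *)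

theory Defs
  imports "HOL-Computational_Algebra.Computational_Algebra"
begin

definition odd_partitions :: "nat \<Rightarrow> nat list set" where
  "odd_partitions n = {lam. sorted_wrt (\<ge>) lam \<and> (\<forall>p\<in>set lam. 0 < p \<and> odd p)
                           \<and> sum_list lam = n}"

definition mult_part :: "nat list \<Rightarrow> nat \<Rightarrow> nat" where
  "mult_part lam i = count_list lam i"

text \<open>h_{O,lambda}(x) = prod over odd i >= 1 of (1+x^i)^(floor(n/i) - m_lambda(i)).
  For i > n the exponent is 0, so the product is taken over odd i in {1..n}.\<close>
definition h_O :: "nat \<Rightarrow> nat list \<Rightarrow> int poly" where
  "h_O n lam = (\<Prod>i\<in>{i\<in>{1..n}. odd i}. (1 + monom 1 i) ^ (n div i - mult_part lam i))"

text \<open>G_O(n,x): gcd in Z[x], normalized (positive leading coefficient).\<close>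
definition G_O :: "nat \<Rightarrow> int poly" where
  "G_O n = Gcd (h_O n ` odd_partitions n)"

definition num_O :: "nat \<Rightarrow> int poly" where
  "num_O n = (\<Sum>lam\<in>odd_partitions n. h_O n lam) div G_O n"

definition largest_odd_divisor :: "nat \<Rightarrow> nat" where
  "largest_odd_divisor M = (GREATEST d. d dvd M \<and> odd d)"

end

theory Submission
  imports Defs
begin

text \<open>
  Over the complex numbers, the multiplicity of a root a in h_lam is the sum of
  floor(n/i) - m_lam(i) over the set E_a of odd i <= n with a^i = -1. When E_a is
  nonempty it consists of the odd multiples of its least element d, so at most
  floor(n/d) parts of an odd partition lie in E_a, with equality for d^(floor(n/d)) 1^(n mod d);
  and floor(n/d) is also the number of m <= n whose largest odd divisor o(m) lies in E_a.
  Comparing multiplicities root by root gives G_O = h_(1^n) / Q with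
  Q = prod_(m<=n) (1 + x^o(m)) / (1 + x). At x = -1 the quotient h_lam / G_O then vanishes
  to order n - length(lam) unless lam = 1^n, so only h_(1^n) / G_O = Q contributes,
  and Q(-1) = prod_(m<=n) o(m) = o(n!).
\<close>

section \<open>Integer polynomials and their complex roots\<close>

abbreviation of_int_poly :: "int poly \<Rightarrow> 'a::comm_ring_1 poly" where
  "of_int_poly \<equiv> map_poly of_int"

lemma of_int_poly_add: "of_int_poly (p + q) = (of_int_poly p + of_int_poly q :: 'a::comm_ring_1 poly)"
  by (rule poly_eqI) (simp add: coeff_map_poly)

lemma of_int_poly_mult: "of_int_poly (p * q) = (of_int_poly p * of_int_poly q :: 'a::comm_ring_1 poly)"
  by (rule poly_eqI) (simp add: coeff_map_poly coeff_mult)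

lemma of_int_poly_power: "of_int_poly (p ^ k) = (of_int_poly p ^ k :: 'a::comm_ring_1 poly)"
  by (induction k) (simp_all add: of_int_poly_mult)

lemma of_int_poly_prod: "of_int_poly (\<Prod>i\<in>A. f i) = (\<Prod>i\<in>A. of_int_poly (f i) :: 'a::comm_ring_1 poly)"
  by (induction A rule: infinite_finite_induct) (simp_all add: of_int_poly_mult)

lemma of_int_poly_eq_0_iff: "(of_int_poly p :: 'a::{comm_ring_1,ring_char_0} poly) = 0 \<longleftrightarrow> p = 0"
  by (rule map_poly_eq_0_iff) auto

lemma of_int_poly_dvd: "p dvd q \<Longrightarrow> (of_int_poly p :: 'a::comm_ring_1 poly) dvd of_int_poly q"
  by (auto simp: of_int_poly_mult dvd_def)

lemma dvd_if_of_int_poly_dvd: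
  fixes p q :: "int poly"
  assumes "lead_coeff p = 1" and "(of_int_poly p :: 'a::{idom,ring_char_0} poly) dvd of_int_poly q"
  shows "p dvd q"
proof -
  have "p \<noteq> 0" using assms(1) by auto
  obtain s r where divmod: "pseudo_divmod q p = (s, r)" by fastforce
  have q: "q = p * s + r"
    using pseudo_divmod(1)[OF \<open>p \<noteq> 0\<close> divmod] assms(1) by simp
  have "(of_int_poly p :: 'a poly) dvd of_int_poly r"
    using assms(2) unfolding q of_int_poly_add of_int_poly_mult by (simp add: dvd_add_right_iff)
  then have "r = 0 \<or> degree p \<le> degree r"
    using dvd_imp_degree_le[of "of_int_poly p :: 'a poly" "of_int_poly r"]
    by (auto simp: of_int_poly_eq_0_iff degree_map_poly)
  then have "r = 0"
    using pseudo_divmod(2)[OF \<open>p \<noteq> 0\<close> divmod] by auto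
  then show ?thesis using q by simp
qed

lemma order_le_imp_dvd:
  fixes p q :: "complex poly"
  assumes "p \<noteq> 0" and "\<And>a. order a p \<le> order a q"
  shows "p dvd q"
proof (cases "q = 0")
  case False
  define R :: "complex multiset \<Rightarrow> complex poly" where "R A = (\<Prod>x\<in>#A. [:-x, 1:])" for A
  have "proots p \<subseteq># proots q"
    using assms False by (simp add: subseteq_mset_def)
  then have "proots q = proots p + (proots q - proots p)"
    by (simp add: subset_mset.add_diff_inverse)
  then have "R (proots q) = R (proots p) * R (proots q - proots p)"
    unfolding R_def by (metis image_mset_union prod_mset.union)
  then have "q = smult (lead_coeff q) (R (proots p) * R (proots q - proots p))"
    using complex_poly_decompose_multiset[of q] by (simp add: R_def)
  then have "R (proots p) dvd q"
    by (metis dvd_smult dvd_triv_left)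
  moreover have "p = smult (lead_coeff p) (R (proots p))"
    using complex_poly_decompose_multiset[of p] by (simp add: R_def)
  ultimately show ?thesis
    using assms(1) by (metis smult_dvd_iff leading_coeff_0_iff)
qed simp

lemma order_prod:
  fixes f :: "'b \<Rightarrow> 'a::idom poly"
  assumes "\<And>i. i \<in> A \<Longrightarrow> f i \<noteq> 0"
  shows "order a (\<Prod>i\<in>A. f i) = (\<Sum>i\<in>A. order a (f i))"
  using assms by (induction A rule: infinite_finite_induct) (simp_all add: order_mult)

lemma order_power:
  fixes p :: "'a::idom poly"
  assumes "p \<noteq> 0"
  shows "order a (p ^ k) = k * order a p"
  using assms by (induction k) (simp_all add: order_mult)

lemma lead_coeff_one_plus_monom: "i \<ge> 1 \<Longrightarrow> lead_coeff (1 + monom 1 i :: 'a::comm_ring_1 poly) = 1"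
  by (subst lead_coeff_add_le) (simp_all add: degree_monom_eq)

lemma one_plus_monom_nonzero:
  assumes "i \<ge> 1"
  shows "(1 + monom 1 i :: 'a::comm_ring_1 poly) \<noteq> 0"
  using lead_coeff_one_plus_monom[OF assms, where 'a = 'a] by (metis coeff_0 zero_neq_one)

lemma order_one_plus_monom:
  fixes a :: "'a::{idom,ring_char_0}"
  assumes "i \<ge> 1"
  shows "order a (1 + monom 1 i) = (if a ^ i = -1 then 1 else 0)"
proof (cases "a ^ i = -1")
  case True
  then have "a \<noteq> 0" using assms by (auto simp: power_0_left)
  then have "order a (pderiv (1 + monom 1 i)) = 0"
    using assms by (intro order_0I) (simp add: pderiv_add pderiv_monom poly_monom)
  then show ?thesis
    using order_pderiv[OF one_plus_monom_nonzero[OF assms], of a] True by (simp add: poly_monom)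
next
  case False
  then have "poly (1 + monom 1 i) a \<noteq> 0"
    by (simp add: poly_monom add_eq_0_iff)
  then show ?thesis using False by (simp add: order_0I)
qed

lemma lead_coeff_Gcd_int_poly:
  fixes H :: "int poly set"
  assumes "h \<in> H" and "lead_coeff h = 1"
  shows "lead_coeff (Gcd H) = 1"
proof -
  obtain f where "h = Gcd H * f" using Gcd_dvd[OF assms(1)] by (elim dvdE)
  then have "lead_coeff (Gcd H) * lead_coeff f = 1"
    using assms(2) by (simp add: lead_coeff_mult)
  moreover from this have "Gcd H \<noteq> 0"
    by (metis leading_coeff_0_iff mult_zero_left zero_neq_one)
  then have "[:sgn (lead_coeff (Gcd H)):] = [:1:]"
    using unit_factor_Gcd[of H] by (simp add: unit_factor_poly_def)
  then have "lead_coeff (Gcd H) > 0"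
    by (simp add: sgn_1_pos)
  ultimately show ?thesis by (simp add: pos_zmult_eq_1_iff)
qed

lemma Gcd_int_poly_eqI:
  fixes H :: "int poly set" and D :: "int poly"
  assumes monic: "\<And>h. h \<in> H \<Longrightarrow> lead_coeff h = 1" and "lead_coeff D = 1"
    and le: "\<And>a h. h \<in> H \<Longrightarrow> order a (of_int_poly D :: complex poly) \<le> order a (of_int_poly h)"
    and attained: "\<And>a. \<exists>h\<in>H. order a (of_int_poly h) \<le> order a (of_int_poly D :: complex poly)"
  shows "Gcd H = D"
proof (rule associated_eqI)
  show "D dvd Gcd H"
  proof (rule Gcd_greatest)
    fix h assume "h \<in> H"
    show "D dvd h"
      by (rule dvd_if_of_int_poly_dvd[where 'a = complex, OF \<open>lead_coeff D = 1\<close> order_le_imp_dvd])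
         (use \<open>lead_coeff D = 1\<close> le[OF \<open>h \<in> H\<close>] in \<open>auto simp: of_int_poly_eq_0_iff\<close>)
  qed
  obtain h where "h \<in> H" using attained by blast
  then have lc: "lead_coeff (Gcd H) = 1" using monic lead_coeff_Gcd_int_poly by blast
  show "Gcd H dvd D"
  proof (rule dvd_if_of_int_poly_dvd[where 'a = complex, OF lc order_le_imp_dvd])
    have "Gcd H \<noteq> 0" using lc by (metis leading_coeff_0_iff zero_neq_one)
    then show "(of_int_poly (Gcd H) :: complex poly) \<noteq> 0"
      by (simp add: of_int_poly_eq_0_iff)
    fix a
    obtain h where h: "h \<in> H" "order a (of_int_poly h) \<le> order a (of_int_poly D :: complex poly)"
      using attained by blast
    have "order a (of_int_poly (Gcd H) :: complex poly) \<le> order a (of_int_poly h)"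
      using monic[OF h(1)]
      by (intro dvd_imp_order_le of_int_poly_dvd Gcd_dvd h(1)) (auto simp: of_int_poly_eq_0_iff)
    with h(2) show "order a (of_int_poly (Gcd H) :: complex poly) \<le> order a (of_int_poly D)"
      by linarith
  qed
  show "normalize D = D"
    using \<open>lead_coeff D = 1\<close> by (simp add: normalize_poly_eq_map_poly)
qed simp

section \<open>Largest odd divisors\<close>

lemma largest_odd_divisor_eq:
  assumes "odd t"
  shows "largest_odd_divisor (2 ^ k * t) = t"
  unfolding largest_odd_divisor_def
proof (rule Greatest_equality)
  fix d assume d: "d dvd 2 ^ k * t \<and> odd d"
  then have "coprime d (2 ^ k)" by simp
  with d have "d dvd t" by (metis coprime_dvd_mult_right_iff)
  moreover have "t > 0" using assms by (rule odd_pos)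
  ultimately show "d \<le> t" by (rule dvd_imp_le)
qed (use assms in simp)

lemma largest_odd_divisor_decomp:
  assumes "(m::nat) > 0"
  obtains k where "m = 2 ^ k * largest_odd_divisor m" and "odd (largest_odd_divisor m)"
proof -
  obtain t where t: "m = 2 ^ multiplicity 2 m * t" "\<not> 2 dvd t"
    using multiplicity_decompose'[of m 2] assms by auto
  then have "largest_odd_divisor m = t"
    using largest_odd_divisor_eq[of t] by (metis t(1))
  with t that show ?thesis by auto
qed

lemma odd_largest_odd_divisor: "m > 0 \<Longrightarrow> odd (largest_odd_divisor m)"
  by (metis largest_odd_divisor_decomp)

lemma largest_odd_divisor_dvd: "m > 0 \<Longrightarrow> largest_odd_divisor m dvd m"
  by (metis largest_odd_divisor_decomp dvd_triv_right)

lemma odd_dvd_largest_odd_divisor_iff: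
  assumes "m > 0" and "odd d"
  shows "d dvd largest_odd_divisor m \<longleftrightarrow> d dvd m"
proof -
  obtain k where "m = 2 ^ k * largest_odd_divisor m"
    using largest_odd_divisor_decomp[OF assms(1)] by blast
  moreover have "coprime d (2 ^ k)" using assms(2) by simp
  ultimately show ?thesis by (metis coprime_dvd_mult_right_iff)
qed

lemma largest_odd_divisor_mult:
  assumes "a > 0" and "b > 0"
  shows "largest_odd_divisor (a * b) = largest_odd_divisor a * largest_odd_divisor b"
proof -
  obtain k l where "a = 2 ^ k * largest_odd_divisor a" "b = 2 ^ l * largest_odd_divisor b"
    and "odd (largest_odd_divisor a)" "odd (largest_odd_divisor b)"
    using largest_odd_divisor_decomp assms by metis
  then have "a * b = 2 ^ (k + l) * (largest_odd_divisor a * largest_odd_divisor b)"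
    by (metis power_add mult.assoc mult.left_commute)
  moreover have "odd (largest_odd_divisor a * largest_odd_divisor b)"
    using \<open>odd (largest_odd_divisor a)\<close> \<open>odd (largest_odd_divisor b)\<close> by simp
  ultimately show ?thesis by (metis largest_odd_divisor_eq)
qed

lemma largest_odd_divisor_fact: "largest_odd_divisor (fact n) = (\<Prod>m\<in>{1..n}. largest_odd_divisor m)"
proof (induction n)
  case 0
  show ?case using largest_odd_divisor_eq[of 1 0] by simp
next
  case (Suc n)
  have "largest_odd_divisor (fact (Suc n)) = largest_odd_divisor (Suc n * fact n)"
    by (simp only: fact_Suc of_nat_id)
  also have "\<dots> = largest_odd_divisor (Suc n) * largest_odd_divisor (fact n)"
    by (rule largest_odd_divisor_mult) simp_all
  also have "\<dots> = (\<Prod>m\<in>{1..Suc n}. largest_odd_divisor m)"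
    using Suc.IH by (simp add: prod.cl_ivl_Suc)
  finally show ?case .
qed

section \<open>Odd partitions\<close>

lemma odd_partition_parts:
  assumes "lam \<in> odd_partitions n"
  shows "set lam \<subseteq> {i\<in>{1..n}. odd i}"
  using assms member_le_sum_list[of _ lam] unfolding odd_partitions_def by fastforce

lemma length_le_sum_list:
  fixes xs :: "nat list"
  assumes "\<And>p. p \<in> set xs \<Longrightarrow> 0 < p"
  shows "length xs \<le> sum_list xs"
  using assms by (induction xs) fastforce+

lemma length_less_sum_list:
  fixes xs :: "nat list"
  assumes "\<And>p. p \<in> set xs \<Longrightarrow> 0 < p" and "p \<in> set xs" and "p \<noteq> 1"
  shows "length xs < sum_list xs"
  using assms
proof (induction xs)
  case (Cons x xs)
  then show ?case using length_le_sum_list[of xs] by (cases "p = x") fastforce+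
qed simp

lemma odd_partition_length_less:
  assumes "lam \<in> odd_partitions n" and "lam \<noteq> replicate n 1"
  shows "length lam < n"
proof -
  have parts: "\<And>p. p \<in> set lam \<Longrightarrow> 0 < p" and sum: "sum_list lam = n"
    using assms(1) by (auto simp: odd_partitions_def)
  have "\<exists>p\<in>set lam. p \<noteq> 1"
  proof (rule ccontr)
    assume "\<not> (\<exists>p\<in>set lam. p \<noteq> 1)"
    then have ones: "replicate (length lam) 1 = lam"
      by (intro replicate_length_same) auto
    then have "length lam = n"
      using sum by (metis sum_list_replicate mult.right_neutral of_nat_id)
    then show False using ones assms(2) by simp
  qed
  then show ?thesis
    using length_less_sum_list[OF parts] sum by blast
qed

lemma finite_odd_partitions: "finite (odd_partitions n)"
proof (rule finite_subset)
  show "odd_partitions n \<subseteq> {xs. set xs \<subseteq> {1..n} \<and> length xs \<le> n}"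
    using odd_partition_parts length_le_sum_list by (fastforce simp: odd_partitions_def)
qed (rule finite_lists_length_le, simp)

lemma replicate_in_odd_partitions:
  assumes "odd d"
  shows "replicate (n div d) d @ replicate (n mod d) 1 \<in> odd_partitions n"
proof -
  have "sorted_wrt (\<ge>) (replicate k x)" for k x :: nat
    by (induction k) auto
  moreover have "d > 0" using assms by (rule odd_pos)
  ultimately show ?thesis
    using assms by (auto simp: odd_partitions_def sorted_wrt_append sum_list_replicate)
qed

lemma ones_in_odd_partitions: "replicate n 1 \<in> odd_partitions n"
  using replicate_in_odd_partitions[of 1 n] by simp

lemma count_list_le_div:
  assumes "lam \<in> odd_partitions n" and "i > 0"
  shows "count_list lam i \<le> n div i"
proof -
  have "i * count_list lam i \<le> sum_list lam"
    by (induction lam) auto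
  then show ?thesis
    using assms by (simp add: odd_partitions_def less_eq_div_iff_mult_less_eq mult.commute)
qed

lemma length_filter_eq_sum_count_list:
  assumes "set xs \<subseteq> X" and "finite X"
  shows "length (filter P xs) = (\<Sum>x\<in>{x\<in>X. P x}. count_list xs x)"
  using assms(1)
proof (induction xs)
  case (Cons y xs)
  have "(\<Sum>x\<in>{x\<in>X. P x}. count_list (y # xs) x)
      = (\<Sum>x\<in>{x\<in>X. P x}. count_list xs x) + (\<Sum>x\<in>{x\<in>X. P x}. if y = x then 1 else 0)"
    unfolding sum.distrib[symmetric] by (rule sum.cong) auto
  also have "(\<Sum>x\<in>{x\<in>X. P x}. if y = x then 1 else 0) = (if P y then 1 else 0)"
    using Cons.prems assms(2) by simp
  finally show ?case using Cons by simp
qed simp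

section \<open>Odd exponents with \<open>a\<^sup>i = -1\<close>\<close>

definition neg_one_exps :: "'a::comm_ring_1 \<Rightarrow> nat \<Rightarrow> nat set" where
  "neg_one_exps a n = {i\<in>{1..n}. odd i \<and> a ^ i = -1}"

definition root_parts :: "'a::comm_ring_1 \<Rightarrow> nat list \<Rightarrow> nat" where
  "root_parts a lam = length (filter (\<lambda>p. a ^ p = -1) lam)"

definition lod_root_count :: "'a::comm_ring_1 \<Rightarrow> nat \<Rightarrow> nat" where
  "lod_root_count a n = card {m\<in>{1..n}. a ^ largest_odd_divisor m = -1}"

lemma power_eq_neg_one_iff_dvd:
  fixes a :: "'a::comm_ring_1"
  assumes d: "odd d" "a ^ d = -1" and min: "\<And>j. odd j \<Longrightarrow> j < d \<Longrightarrow> a ^ j \<noteq> -1"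
    and "odd i"
  shows "a ^ i = -1 \<longleftrightarrow> d dvd i"
proof
  assume "d dvd i"
  then obtain k where "i = d * k" ..
  with \<open>odd i\<close> d show "a ^ i = -1" by (simp add: power_mult)
next
  assume ai: "a ^ i = -1"
  define q r where "q = i div d" and "r = i mod d"
  have i: "i = q * d + r" and "r < d"
    using odd_pos[OF d(1)] by (simp_all add: q_def r_def)
  have "-1 = (-1) ^ q * a ^ r"
    using ai d(2) by (simp add: i power_add power_mult mult.commute)
  show "d dvd i"
  proof (cases "even q")
    case True
    then have "a ^ r = -1" and "odd r"
      using \<open>-1 = (-1) ^ q * a ^ r\<close> i \<open>odd i\<close> by auto
    with min \<open>r < d\<close> show ?thesis by blast
  next
    case False
    then have "a ^ r = 1" and "even r"
      using \<open>-1 = (-1) ^ q * a ^ r\<close> i \<open>odd i\<close> d(1) by auto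
    have "a ^ (d - r) * a ^ r = -1"
      using d(2) \<open>r < d\<close> by (simp flip: power_add)
    then have "a ^ (d - r) = -1" using \<open>a ^ r = 1\<close> by simp
    moreover have "odd (d - r)" using \<open>even r\<close> d(1) \<open>r < d\<close> by auto
    ultimately have "r = 0" using min[of "d - r"] by (cases "r = 0") auto
    then show ?thesis by (simp add: r_def dvd_eq_mod_eq_0)
  qed
qed

lemma neg_one_exps_Min:
  fixes a :: "'a::comm_ring_1"
  assumes "neg_one_exps a n \<noteq> {}"
  obtains d where "d \<in> neg_one_exps a n" and "\<And>i. odd i \<Longrightarrow> a ^ i = -1 \<longleftrightarrow> d dvd i"
proof
  let ?d = "Min (neg_one_exps a n)"
  have fin: "finite (neg_one_exps a n)" by (simp add: neg_one_exps_def)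
  show d: "?d \<in> neg_one_exps a n" using Min_in[OF fin assms] .
  have "a ^ j \<noteq> -1" if "odd j" "j < ?d" for j
  proof
    assume "a ^ j = -1"
    then have "j \<in> neg_one_exps a n"
      using that d by (auto simp: neg_one_exps_def odd_pos Suc_le_eq)
    then show False using Min_le[OF fin] that(2) by fastforce
  qed
  then show "a ^ i = -1 \<longleftrightarrow> ?d dvd i" if "odd i" for i
    using power_eq_neg_one_iff_dvd d that by (auto simp: neg_one_exps_def)
qed

lemma card_multiples:
  assumes "(d::nat) > 0"
  shows "card {m\<in>{1..n}. d dvd m} = n div d"
proof -
  have "{m\<in>{1..n}. d dvd m} = (\<lambda>j. d * j) ` {1..n div d}"
    using assms by (auto simp: less_eq_div_iff_mult_less_eq mult.commute elim!: dvdE)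
  then show ?thesis
    using assms by (simp add: card_image inj_on_def)
qed

lemma lod_root_count_eq_div:
  fixes a :: "'a::comm_ring_1"
  assumes "odd d" and "\<And>i. odd i \<Longrightarrow> a ^ i = -1 \<longleftrightarrow> d dvd i"
  shows "lod_root_count a n = n div d"
proof -
  have "{m\<in>{1..n}. a ^ largest_odd_divisor m = -1} = {m\<in>{1..n}. d dvd m}"
    using assms odd_largest_odd_divisor odd_dvd_largest_odd_divisor_iff by auto
  then show ?thesis
    using card_multiples[OF odd_pos[OF assms(1)]] by (simp add: lod_root_count_def)
qed

lemma lod_root_count_eq_0:
  fixes a :: "'a::comm_ring_1"
  assumes "neg_one_exps a n = {}"
  shows "lod_root_count a n = 0"
proof -
  have "largest_odd_divisor m \<in> neg_one_exps a n"
    if "m \<in> {1..n}" and "a ^ largest_odd_divisor m = -1" for m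
  proof -
    have "largest_odd_divisor m \<le> m"
      using that(1) by (intro dvd_imp_le largest_odd_divisor_dvd) auto
    then show ?thesis
      using that odd_largest_odd_divisor[of m] by (auto simp: neg_one_exps_def odd_pos Suc_le_eq)
  qed
  then show ?thesis using assms by (auto simp: lod_root_count_def)
qed

lemma root_parts_eq_0:
  fixes a :: "'a::comm_ring_1"
  assumes "lam \<in> odd_partitions n" and "neg_one_exps a n = {}"
  shows "root_parts a lam = 0"
  using odd_partition_parts[OF assms(1)] assms(2)
  by (auto simp: root_parts_def neg_one_exps_def filter_empty_conv)

lemma length_filter_le_sum_list:
  fixes xs :: "nat list"
  assumes "\<And>x. x \<in> set xs \<Longrightarrow> P x \<Longrightarrow> d \<le> x"
  shows "d * length (filter P xs) \<le> sum_list xs"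
  using assms by (induction xs) (auto intro: add_mono trans_le_add2)

lemma root_parts_le_lod_root_count:
  fixes a :: "'a::comm_ring_1"
  assumes "lam \<in> odd_partitions n"
  shows "root_parts a lam \<le> lod_root_count a n"
proof (cases "neg_one_exps a n = {}")
  case True
  then show ?thesis using root_parts_eq_0[OF assms True] by simp
next
  case False
  then obtain d where d: "d \<in> neg_one_exps a n" "\<And>i. odd i \<Longrightarrow> a ^ i = -1 \<longleftrightarrow> d dvd i"
    using neg_one_exps_Min[OF False] by blast
  have "odd d" using d(1) by (simp add: neg_one_exps_def)
  have "d \<le> p" if "p \<in> set lam" and "a ^ p = -1" for p
  proof -
    have "odd p" "p > 0" using odd_partition_parts[OF assms] that(1) by auto
    then show ?thesis using d(2)[of p] that(2) by (simp add: dvd_imp_le)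
  qed
  then have "d * root_parts a lam \<le> n"
    using length_filter_le_sum_list assms by (fastforce simp: root_parts_def odd_partitions_def)
  then have "root_parts a lam \<le> n div d"
    using odd_pos[OF \<open>odd d\<close>] by (simp add: less_eq_div_iff_mult_less_eq mult.commute)
  then show ?thesis using lod_root_count_eq_div[OF \<open>odd d\<close> d(2)] by simp
qed

lemma ex_root_parts_eq_lod_root_count:
  fixes a :: "'a::comm_ring_1"
  shows "\<exists>lam\<in>odd_partitions n. root_parts a lam = lod_root_count a n"
proof (cases "neg_one_exps a n = {}")
  case True
  then show ?thesis
    using ones_in_odd_partitions root_parts_eq_0 lod_root_count_eq_0 by metis
next
  case False
  then obtain d where d: "d \<in> neg_one_exps a n" "\<And>i. odd i \<Longrightarrow> a ^ i = -1 \<longleftrightarrow> d dvd i"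
    using neg_one_exps_Min[OF False] by blast
  have "odd d" "a ^ d = -1" using d(1) by (simp_all add: neg_one_exps_def)
  \<comment> \<open>the trailing parts \<open>1\<close> count only if \<open>a = -1\<close>, and then \<open>d = 1\<close>\<close>
  have "a = -1 \<Longrightarrow> d = 1" using d(2)[of 1] by simp
  then have "root_parts a (replicate (n div d) d @ replicate (n mod d) 1) = n div d"
    using \<open>a ^ d = -1\<close> by (cases "a = -1") (auto simp: root_parts_def)
  then show ?thesis
    using replicate_in_odd_partitions[OF \<open>odd d\<close>] lod_root_count_eq_div[OF \<open>odd d\<close> d(2)] by metis
qed

section \<open>Root multiplicities of \<open>h_O\<close> and the gcd\<close>

lemma lead_coeff_h_O: "lead_coeff (h_O n lam) = 1"
  unfolding h_O_def lead_coeff_prod lead_coeff_power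
proof (rule prod.neutral, rule ballI)
  fix i assume "i \<in> {i\<in>{1..n}. odd i}"
  then have "lead_coeff (1 + monom 1 i :: int poly) = 1"
    by (intro lead_coeff_one_plus_monom) simp
  then show "lead_coeff (1 + monom 1 i :: int poly) ^ (n div i - mult_part lam i) = 1"
    by (simp only: power_one)
qed

lemma order_h_O:
  fixes a :: "'a::{idom,ring_char_0}"
  assumes "lam \<in> odd_partitions n"
  shows "order a (of_int_poly (h_O n lam)) + root_parts a lam = (\<Sum>i\<in>neg_one_exps a n. n div i)"
proof -
  let ?I = "{i\<in>{1..n}. odd i}"
  have E: "neg_one_exps a n = {i\<in>?I. a ^ i = -1}" by (auto simp: neg_one_exps_def)
  have "order a (of_int_poly (h_O n lam))
      = (\<Sum>i\<in>?I. (n div i - count_list lam i) * order a (1 + monom 1 i :: 'a poly))"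
    unfolding h_O_def mult_part_def of_int_poly_prod of_int_poly_power
    by (subst order_prod)
       (auto simp: of_int_poly_add map_poly_monom order_power one_plus_monom_nonzero)
  also have "\<dots> = (\<Sum>i\<in>?I. if a ^ i = -1 then n div i - count_list lam i else 0)"
    by (rule sum.cong) (auto simp: order_one_plus_monom)
  also have "\<dots> = (\<Sum>i\<in>neg_one_exps a n. n div i - count_list lam i)"
    unfolding E by (rule sum.inter_filter[symmetric]) simp
  also have "\<dots> = (\<Sum>i\<in>neg_one_exps a n. n div i) - (\<Sum>i\<in>neg_one_exps a n. count_list lam i)"
    using count_list_le_div[OF assms] by (intro sum_subtractf_nat) (auto simp: neg_one_exps_def)
  finally have "order a (of_int_poly (h_O n lam) :: 'a poly)
      = (\<Sum>i\<in>neg_one_exps a n. n div i) - (\<Sum>i\<in>neg_one_exps a n. count_list lam i)" .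
  moreover have "(\<Sum>i\<in>neg_one_exps a n. count_list lam i) \<le> (\<Sum>i\<in>neg_one_exps a n. n div i)"
    using count_list_le_div[OF assms] by (intro sum_mono) (auto simp: neg_one_exps_def)
  moreover have "root_parts a lam = (\<Sum>i\<in>neg_one_exps a n. count_list lam i)"
    unfolding root_parts_def E
    by (rule length_filter_eq_sum_count_list[OF odd_partition_parts[OF assms]]) simp
  ultimately show ?thesis by simp
qed

definition alt_geometric_sum :: "nat \<Rightarrow> int poly" where
  "alt_geometric_sum j = (\<Sum>k<j. [:0, -1:] ^ k)"

lemma alt_geometric_sum_mult:
  assumes "odd j"
  shows "(1 + monom 1 1) * alt_geometric_sum j = 1 + monom 1 j"
proof -
  have "[:0, -1:] ^ j = (- [:0, 1:]) ^ j" by simp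
  also have "\<dots> = - (monom 1 j :: int poly)"
    by (subst power_minus_odd[OF assms]) (simp add: monom_altdef)
  finally have "[:0, -1:] ^ j = - (monom 1 j :: int poly)" .
  moreover have "1 - [:0, -1:] = (1 + monom 1 1 :: int poly)"
    by (simp add: monom_altdef)
  ultimately show ?thesis
    using one_diff_power_eq[of "[:0, -1:] :: int poly" j] by (simp add: alt_geometric_sum_def)
qed

lemma lead_coeff_alt_geometric_sum:
  assumes "odd j"
  shows "lead_coeff (alt_geometric_sum j) = 1"
proof -
  have "1 \<le> j" using odd_pos[OF assms] by simp
  have "lead_coeff ((1 + monom 1 1) * alt_geometric_sum j) = 1"
    unfolding alt_geometric_sum_mult[OF assms] by (rule lead_coeff_one_plus_monom[OF \<open>1 \<le> j\<close>])
  then show ?thesis by (simp only: lead_coeff_mult lead_coeff_one_plus_monom[of 1] mult_1 order_refl)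
qed

lemma alt_geometric_sum_nonzero: "odd j \<Longrightarrow> alt_geometric_sum j \<noteq> 0"
  using lead_coeff_alt_geometric_sum by fastforce

lemma poly_alt_geometric_sum_neg_one: "poly (alt_geometric_sum j) (-1) = int j"
  by (simp add: alt_geometric_sum_def poly_sum)

lemma order_alt_geometric_sum:
  fixes a :: "'a::{idom,ring_char_0}"
  assumes "odd j"
  shows "order a (of_int_poly (alt_geometric_sum j)) + (if a = -1 then 1 else 0)
           = (if a ^ j = -1 then 1 else 0)"
proof -
  have "(1 + monom 1 1) * of_int_poly (alt_geometric_sum j) = (1 + monom 1 j :: 'a poly)"
    using arg_cong[OF alt_geometric_sum_mult[OF assms], of of_int_poly]
    by (simp only: of_int_poly_mult of_int_poly_add map_poly_monom map_poly_1' of_int_0 of_int_1)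
  moreover have "of_int_poly (alt_geometric_sum j) \<noteq> (0 :: 'a poly)"
    using alt_geometric_sum_nonzero[OF assms] by (simp add: of_int_poly_eq_0_iff)
  ultimately show ?thesis
    using order_mult[of "1 + monom 1 1" "of_int_poly (alt_geometric_sum j) :: 'a poly" a]
      order_one_plus_monom[of 1 a] order_one_plus_monom[of j a] odd_pos[OF assms]
    by (simp add: one_plus_monom_nonzero add.commute Suc_le_eq)
qed

definition odd_part_product :: "nat \<Rightarrow> int poly" where
  "odd_part_product n = (\<Prod>m\<in>{1..n}. alt_geometric_sum (largest_odd_divisor m))"

lemma lead_coeff_odd_part_product: "lead_coeff (odd_part_product n) = 1"
  unfolding odd_part_product_def lead_coeff_prod
  by (rule prod.neutral) (simp add: lead_coeff_alt_geometric_sum odd_largest_odd_divisor)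

lemma poly_odd_part_product_neg_one:
  "poly (odd_part_product n) (-1) = int (largest_odd_divisor (fact n))"
  by (simp add: odd_part_product_def largest_odd_divisor_fact poly_prod
      poly_alt_geometric_sum_neg_one)

lemma order_odd_part_product:
  fixes a :: "'a::{idom,ring_char_0}"
  shows "order a (of_int_poly (odd_part_product n)) + (if a = -1 then n else 0) = lod_root_count a n"
proof -
  have "order a (of_int_poly (odd_part_product n) :: 'a poly)
      = (\<Sum>m\<in>{1..n}. order a (of_int_poly (alt_geometric_sum (largest_odd_divisor m)) :: 'a poly))"
    unfolding odd_part_product_def of_int_poly_prod
    by (rule order_prod)
       (simp add: of_int_poly_eq_0_iff alt_geometric_sum_nonzero odd_largest_odd_divisor)
  moreover have "(if a = -1 then n else 0) = (\<Sum>m\<in>{1..n}. if a = -1 then 1 else 0)"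
    by simp
  moreover have "(\<Sum>m\<in>{1..n}. order a (of_int_poly (alt_geometric_sum (largest_odd_divisor m)) :: 'a poly)
      + (if a = -1 then 1 else 0)) = (\<Sum>m\<in>{1..n}. if a ^ largest_odd_divisor m = -1 then 1 else 0)"
    by (rule sum.cong) (simp_all add: order_alt_geometric_sum odd_largest_odd_divisor)
  moreover have "\<dots> = lod_root_count a n"
    unfolding lod_root_count_def card_eq_sum by (rule sum.inter_filter[symmetric]) simp
  ultimately show ?thesis by (simp only: sum.distrib)
qed

lemma root_parts_ones: "root_parts a (replicate n 1) = (if a = -1 then n else 0)"
  by (simp add: root_parts_def)

lemma root_parts_neg_one:
  assumes "lam \<in> odd_partitions n"
  shows "root_parts (-1 :: 'a::comm_ring_1) lam = length lam"
proof -
  have "filter (\<lambda>p. (-1 :: 'a) ^ p = -1) lam = lam"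
    using odd_partition_parts[OF assms] by (intro filter_True) auto
  then show ?thesis by (simp add: root_parts_def)
qed

lemma lod_root_count_neg_one: "lod_root_count (-1 :: 'a::comm_ring_1) n = n"
proof -
  have "{m\<in>{1..n}. (-1 :: 'a) ^ largest_odd_divisor m = -1} = {1..n}"
    using odd_largest_odd_divisor by force
  then show ?thesis by (simp add: lod_root_count_def)
qed

lemma lod_root_count_le:
  fixes a :: "'a::{idom,ring_char_0}"
  shows "lod_root_count a n \<le> (\<Sum>i\<in>neg_one_exps a n. n div i)"
  using ex_root_parts_eq_lod_root_count[of n a] order_h_O by (metis le_add2)

lemma odd_part_product_dvd: "odd_part_product n dvd h_O n (replicate n 1)"
proof (rule dvd_if_of_int_poly_dvd[where 'a = complex, OF lead_coeff_odd_part_product order_le_imp_dvd])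
  show "of_int_poly (odd_part_product n) \<noteq> (0 :: complex poly)"
    using lead_coeff_odd_part_product[of n] by (auto simp: of_int_poly_eq_0_iff)
  fix a :: complex
  show "order a (of_int_poly (odd_part_product n)) \<le> order a (of_int_poly (h_O n (replicate n 1)))"
    using order_odd_part_product[of a n] order_h_O[OF ones_in_odd_partitions, of a n]
      root_parts_ones[of a n] lod_root_count_le[of a n]
    by linarith
qed

lemma order_h_O_div_odd_part_product:
  fixes a :: "'a::{idom,ring_char_0}"
  shows "order a (of_int_poly (h_O n (replicate n 1) div odd_part_product n))
           + lod_root_count a n = (\<Sum>i\<in>neg_one_exps a n. n div i)"
proof -
  let ?h = "h_O n (replicate n 1)" and ?Q = "odd_part_product n"
  have eq: "of_int_poly ?h = (of_int_poly ?Q * of_int_poly (?h div ?Q) :: 'a poly)"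
    using odd_part_product_dvd[of n] by (simp flip: of_int_poly_mult)
  have "?h \<noteq> 0"
    using lead_coeff_h_O[of n "replicate n 1"] by auto
  then have "(of_int_poly ?Q * of_int_poly (?h div ?Q) :: 'a poly) \<noteq> 0"
    unfolding eq[symmetric] by (simp add: of_int_poly_eq_0_iff)
  then have "order a (of_int_poly ?h :: 'a poly)
      = order a (of_int_poly ?Q) + order a (of_int_poly (?h div ?Q))"
    unfolding eq by (rule order_mult)
  then show ?thesis
    using order_odd_part_product[of a n] order_h_O[OF ones_in_odd_partitions, of a n]
      root_parts_ones[of a n]
    by linarith
qed

lemma G_O_eq: "G_O n = h_O n (replicate n 1) div odd_part_product n"
  unfolding G_O_def
proof (rule Gcd_int_poly_eqI)
  let ?h = "h_O n (replicate n 1)" and ?Q = "odd_part_product n"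
  show "lead_coeff h = 1" if "h \<in> h_O n ` odd_partitions n" for h
    using that lead_coeff_h_O by auto
  have "lead_coeff (?Q * (?h div ?Q)) = 1"
    using odd_part_product_dvd[of n] lead_coeff_h_O[of n "replicate n 1"] by simp
  then show "lead_coeff (?h div ?Q) = 1"
    by (simp only: lead_coeff_mult lead_coeff_odd_part_product mult_1)
  fix a :: complex
  show "order a (of_int_poly (?h div ?Q)) \<le> order a (of_int_poly h)"
    if h: "h \<in> h_O n ` odd_partitions n" for h
  proof -
    obtain lam where lam: "lam \<in> odd_partitions n" "h = h_O n lam"
      using h by blast
    show ?thesis
      using order_h_O_div_odd_part_product[of a n] order_h_O[OF lam(1), of a]
        root_parts_le_lod_root_count[OF lam(1), of a] unfolding lam(2)
      by linarith
  qed
  obtain lam where lam: "lam \<in> odd_partitions n" "root_parts a lam = lod_root_count a n"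
    using ex_root_parts_eq_lod_root_count by blast
  have "order a (of_int_poly (h_O n lam)) \<le> order a (of_int_poly (?h div ?Q) :: complex poly)"
    using order_h_O_div_odd_part_product[of a n] order_h_O[OF lam(1), of a] lam(2)
    by linarith
  then show "\<exists>h\<in>h_O n ` odd_partitions n. order a (of_int_poly h) \<le> order a (of_int_poly (?h div ?Q))"
    using lam(1) by blast
qed

lemma h_O_ones_eq: "h_O n (replicate n 1) = odd_part_product n * G_O n"
  using odd_part_product_dvd[of n] by (simp add: G_O_eq)

lemma G_O_nonzero: "G_O n \<noteq> 0"
proof
  assume "G_O n = 0"
  then have "h_O n (replicate n 1) = 0" unfolding h_O_ones_eq by simp
  then show False using lead_coeff_h_O[of n "replicate n 1"] by simp
qed

lemma poly_h_O_div_G_O_neg_one: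
  assumes lam: "lam \<in> odd_partitions n" "lam \<noteq> replicate n 1"
  shows "poly (h_O n lam div G_O n) (-1) = 0"
proof -
  have "G_O n dvd h_O n lam"
    unfolding G_O_def using lam(1) by (simp add: Gcd_dvd)
  then obtain c where c: "h_O n lam = G_O n * c" ..
  have "h_O n lam \<noteq> 0" using lead_coeff_h_O[of n lam] by auto
  then have "order (-1) (h_O n lam) = order (-1) (G_O n) + order (-1) c"
    unfolding c by (rule order_mult)
  moreover have map_poly_of_int: "map_poly of_int p = p" for p :: "int poly"
    by (simp add: of_int_eq_id)
  let ?K = "\<Sum>i\<in>neg_one_exps (-1 :: int) n. n div i"
  have "order (-1) (h_O n lam) + root_parts (-1 :: int) lam = ?K"
    using order_h_O[OF lam(1), of "-1 :: int"] by (simp only: map_poly_of_int)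
  moreover have "order (-1) (G_O n) + lod_root_count (-1 :: int) n = ?K"
    using order_h_O_div_odd_part_product[of "-1 :: int" n] by (simp only: map_poly_of_int G_O_eq)
  ultimately have "order (-1) c \<noteq> 0"
    using odd_partition_length_less[OF lam] root_parts_neg_one[OF lam(1), where 'a = int]
      lod_root_count_neg_one[of n, where 'a = int]
    by linarith
  then have "poly c (-1) = 0" by (simp add: order_root)
  moreover have "h_O n lam div G_O n = c"
    using c G_O_nonzero[of n] by simp
  ultimately show ?thesis by simp
qed

lemma h_O_ones_div_G_O: "h_O n (replicate n 1) div G_O n = odd_part_product n"
  unfolding h_O_ones_eq using G_O_nonzero[of n] by simp

lemma num_O_eq: "num_O n = (\<Sum>lam\<in>odd_partitions n. h_O n lam div G_O n)"
proof -
  have "G_O n dvd h_O n lam" if "lam \<in> odd_partitions n" for lam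
    unfolding G_O_def using that by (simp add: Gcd_dvd)
  then have "(\<Sum>lam\<in>odd_partitions n. h_O n lam) = G_O n * (\<Sum>lam\<in>odd_partitions n. h_O n lam div G_O n)"
    by (simp add: sum_distrib_left)
  then show ?thesis
    using G_O_nonzero[of n] by (simp add: num_O_def)
qed

theorem theorem3:
  fixes n :: nat
  assumes "n \<ge> 1"
  shows "poly (num_O n) (-1) = int (largest_odd_divisor (fact n))"
proof -
  let ?ones = "replicate n 1" and ?c = "\<lambda>lam. poly (h_O n lam div G_O n) (-1)"
  have "poly (num_O n) (-1) = ?c ?ones + (\<Sum>lam\<in>odd_partitions n - {?ones}. ?c lam)"
    unfolding num_O_eq poly_sum
    by (rule sum.remove[OF finite_odd_partitions ones_in_odd_partitions])
  also have "(\<Sum>lam\<in>odd_partitions n - {?ones}. ?c lam) = 0"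
    by (intro sum.neutral ballI poly_h_O_div_G_O_neg_one) auto
  also have "?c ?ones = int (largest_odd_divisor (fact n))"
    by (simp only: h_O_ones_div_G_O poly_odd_part_product_neg_one)
  finally show ?thesis by simp
qed

end
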